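(* Let $e_1,\dots,e_k\in\mathbb{C}^{n\times n}$ be an irreducible anticommuting family. Then every $e_i$ is either invertible or nilpotent. Moreover: (1) for every $i\in[k]$ there is $\lambda_i\in\mathbb{C}$ with $\mathrm{spec}(e_i)\subseteq\{\lambda_i,-\lambda_i\}$; (2) if at least two of the matrices $e_1,\dots,e_k$ are invertible, then $n$ is even and for every invertible $e_i$ the algebraic multiplicity of $\lambda_i$ as an eigenvalue of $e_i$ is exactly $n/2$.
   Context: A family $e_1,\dots,e_k$ of complex $n\times n$ matrices is called anticommuting if $e_ie_j=-e_je_i$ for all distinct $i,j\in[k]=\{1,\dots,k\}$. For $X_1\in\mathbb{C}^{r_1\times r_1}$, $X_2\in\mathbb{C}^{r_2\times r_2}$, $X_1\oplus X_2$ denotes the block-diagonal matrix $\begin{pmatrix}X_1&0\\0&X_2\end{pmatrix}$. A family $e_1,\dots,e_k\in\mathbb{C}^{n\times n}$ is reducible if there exist an invertible $V\in\mathbb{C}^{n\times n}$ and integers $0<r_1<n$, $r_2=n-r_1$, and matrices $e_i(1)\in\mathbb{C}^{r_1\times r_1}$, $e_i(2)\in\mathbb{C}^{r_2\times r_2}$ such that $Ve_iV^{-1}=e_i(1)\oplus e_i(2)$ for all $i\in[k]$; otherwise it is irreducible. $\mathrm{spec}(X)$ is the set of eigenvalues of $X$. *)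

theory Defs
  imports "Jordan_Normal_Form.Spectral_Radius"
begin

definition anticommuting :: "nat \<Rightarrow> nat \<Rightarrow> (nat \<Rightarrow> complex mat) \<Rightarrow> bool" where
  "anticommuting n k e \<longleftrightarrow>
     (\<forall>i\<in>{1..k}. e i \<in> carrier_mat n n) \<and>
     (\<forall>i\<in>{1..k}. \<forall>j\<in>{1..k}. i \<noteq> j \<longrightarrow> e i * e j = - (e j * e i))"

definition reducible_family :: "nat \<Rightarrow> nat \<Rightarrow> (nat \<Rightarrow> complex mat) \<Rightarrow> bool" where
  "reducible_family n k e \<longleftrightarrow>
     (\<exists>V Vinv r1 (E1 :: nat \<Rightarrow> complex mat) (E2 :: nat \<Rightarrow> complex mat).
        V \<in> carrier_mat n n \<and> Vinv \<in> carrier_mat n n \<and>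
        V * Vinv = 1\<^sub>m n \<and> Vinv * V = 1\<^sub>m n \<and>
        0 < r1 \<and> r1 < n \<and>
        (\<forall>i\<in>{1..k}. E1 i \<in> carrier_mat r1 r1 \<and> E2 i \<in> carrier_mat (n - r1) (n - r1) \<and>
           V * e i * Vinv = four_block_mat (E1 i) (0\<^sub>m r1 (n - r1)) (0\<^sub>m (n - r1) r1) (E2 i)))"

definition irreducible_family :: "nat \<Rightarrow> nat \<Rightarrow> (nat \<Rightarrow> complex mat) \<Rightarrow> bool" where
  "irreducible_family n k e \<longleftrightarrow> \<not> reducible_family n k e"

definition nilpotent_mat :: "complex mat \<Rightarrow> bool" where
  "nilpotent_mat A \<longleftrightarrow> (\<exists>m. A ^\<^sub>m m = 0\<^sub>m (dim_row A) (dim_col A))"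

definition alg_mult :: "complex mat \<Rightarrow> complex \<Rightarrow> nat" where
  "alg_mult A x = order x (char_poly A)"

end

theory Submission
  imports Defs
begin

text \<open>The square of each \<open>e\<^sub>i\<close> commutes with the whole family. A matrix commuting with an
  irreducible family has only one eigenvalue: otherwise, shifted so that one eigenvalue is 0, it is
  similar to a block diagonal matrix \<open>diag(N, C)\<close> with \<open>N\<close> nilpotent and \<open>C\<close> invertible, and
  anything commuting with it also commutes with \<open>diag(0, C\<^sup>m)\<close> for large \<open>m\<close>, hence is block
  diagonal, which makes the family reducible. So \<open>e\<^sub>i\<^sup>2\<close> has a single eigenvalue \<open>\<mu>\<close> and
  \<open>spec(e\<^sub>i) \<subseteq> {\<plusminus>\<surd>\<mu>}\<close>; if \<open>0\<close> is an eigenvalue, all Jordan blocks of \<open>e\<^sub>i\<close> are nilpotent.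
  If moreover some other \<open>e\<^sub>j\<close> is invertible, conjugation by \<open>e\<^sub>j\<close> maps \<open>e\<^sub>i\<close> to \<open>-e\<^sub>i\<close>, so
  \<open>\<lambda>\<^sub>i\<close> and \<open>-\<lambda>\<^sub>i\<close> have equal multiplicities, which add up to \<open>n\<close>.\<close>

lemma four_block_mat_inject:
  assumes "A \<in> carrier_mat a c" "A' \<in> carrier_mat a c" "B \<in> carrier_mat a d" "B' \<in> carrier_mat a d"
    and "C \<in> carrier_mat b c" "C' \<in> carrier_mat b c" "D \<in> carrier_mat b d" "D' \<in> carrier_mat b d"
    and eq: "four_block_mat A B C D = four_block_mat A' B' C' D'"
  shows "A = A' \<and> B = B' \<and> C = C' \<and> D = D'"
proof -
  have e: "four_block_mat A B C D $$ (i, j) = four_block_mat A' B' C' D' $$ (i, j)" for i j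
    using eq by simp
  have "A = A'"
  proof (rule eq_matI)
    show "A $$ (i, j) = A' $$ (i, j)" if "i < dim_row A'" "j < dim_col A'" for i j
      using that e[of i j] assms(1-8) by auto
  qed (use assms in auto)
  moreover have "B = B'"
  proof (rule eq_matI)
    show "B $$ (i, j) = B' $$ (i, j)" if "i < dim_row B'" "j < dim_col B'" for i j
      using that e[of i "j + c"] assms(1-8) by auto
  qed (use assms in auto)
  moreover have "C = C'"
  proof (rule eq_matI)
    show "C $$ (i, j) = C' $$ (i, j)" if "i < dim_row C'" "j < dim_col C'" for i j
      using that e[of "i + a" j] assms(1-8) by auto
  qed (use assms in auto)
  moreover have "D = D'"
  proof (rule eq_matI)
    show "D $$ (i, j) = D' $$ (i, j)" if "i < dim_row D'" "j < dim_col D'" for i j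
      using that e[of "i + a" "j + c"] assms(1-8) by auto
  qed (use assms in auto)
  ultimately show ?thesis by blast
qed

lemma similar_mat_four_block_swap:
  fixes A B :: "'a :: comm_ring_1 mat"
  assumes A: "A \<in> carrier_mat a a" and B: "B \<in> carrier_mat b b"
  shows "similar_mat (four_block_mat A (0\<^sub>m a b) (0\<^sub>m b a) B) (four_block_mat B (0\<^sub>m b a) (0\<^sub>m a b) A)"
proof -
  define P where "P = four_block_mat (0\<^sub>m a b) (1\<^sub>m a) (1\<^sub>m b) (0\<^sub>m b a :: 'a mat)"
  define Q where "Q = four_block_mat (0\<^sub>m b a) (1\<^sub>m b) (1\<^sub>m a) (0\<^sub>m a b :: 'a mat)"
  have "P * Q = 1\<^sub>m (a + b)" unfolding P_def Q_def
    by (subst mult_four_block_mat[where ?nr1.0=a and ?n1.0=b and ?n2.0=a and ?nr2.0=b and ?nc1.0=a and ?nc2.0=b]) auto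
  moreover have "Q * P = 1\<^sub>m (a + b)" unfolding P_def Q_def
    by (subst mult_four_block_mat[where ?nr1.0=b and ?n1.0=a and ?n2.0=b and ?nr2.0=a and ?nc1.0=b and ?nc2.0=a])
      (auto simp: add.commute)
  moreover have "P * four_block_mat B (0\<^sub>m b a) (0\<^sub>m a b) A = four_block_mat (0\<^sub>m a b) A B (0\<^sub>m b a)"
    unfolding P_def using A B
    by (subst mult_four_block_mat[where ?nr1.0=a and ?n1.0=b and ?n2.0=a and ?nr2.0=b and ?nc1.0=b and ?nc2.0=a]) auto
  moreover have "four_block_mat (0\<^sub>m a b) A B (0\<^sub>m b a) * Q = four_block_mat A (0\<^sub>m a b) (0\<^sub>m b a) B"
    unfolding Q_def using A B
    by (subst mult_four_block_mat[where ?nr1.0=a and ?n1.0=b and ?n2.0=a and ?nr2.0=b and ?nc1.0=a and ?nc2.0=b]) auto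
  ultimately have "similar_mat_wit (four_block_mat A (0\<^sub>m a b) (0\<^sub>m b a) B) (four_block_mat B (0\<^sub>m b a) (0\<^sub>m a b) A) P Q"
    using A B by (intro similar_mat_witI) (auto simp: P_def Q_def)
  then show ?thesis unfolding similar_mat_def by blast
qed

lemma commute_pow_mat:
  fixes A B :: "'a :: semiring_1 mat"
  assumes A: "A \<in> carrier_mat n n" and B: "B \<in> carrier_mat n n" and AB: "A * B = B * A"
  shows "A ^\<^sub>m k * B = B * A ^\<^sub>m k"
proof (induct k)
  case (Suc k)
  have Ak: "A ^\<^sub>m k \<in> carrier_mat n n" using A by simp
  have "A ^\<^sub>m Suc k * B = A ^\<^sub>m k * (A * B)" using A B Ak by (simp add: assoc_mult_mat[of _ n n _ n _ n])
  also have "\<dots> = (A ^\<^sub>m k * B) * A" using A B Ak AB by (simp add: assoc_mult_mat[of _ n n _ n _ n])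
  also have "\<dots> = B * A ^\<^sub>m Suc k" using A B Ak Suc by (simp add: assoc_mult_mat[of _ n n _ n _ n])
  finally show ?case .
qed (use A B in simp)

lemma commute_similar_mat_wit:
  fixes M E P Q :: "'a :: semiring_1 mat"
  assumes c: "M \<in> carrier_mat n n" "E \<in> carrier_mat n n" "P \<in> carrier_mat n n" "Q \<in> carrier_mat n n"
    and PQ: "P * Q = 1\<^sub>m n" and ME: "M * E = E * M"
  shows "(Q * M * P) * (Q * E * P) = (Q * E * P) * (Q * M * P)"
proof -
  have "(Q * M * P) * (Q * E * P) = Q * M * (P * Q) * E * P"
    using c by (simp add: assoc_mult_mat[of _ n n _ n _ n])
  also have "\<dots> = Q * (M * E) * P" using c PQ by (simp add: assoc_mult_mat[of _ n n _ n _ n])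
  also have "\<dots> = Q * E * (P * Q) * M * P" using c PQ by (simp add: ME assoc_mult_mat[of _ n n _ n _ n])
  also have "\<dots> = (Q * E * P) * (Q * M * P)" using c by (simp add: assoc_mult_mat[of _ n n _ n _ n])
  finally show ?thesis .
qed

lemma commute_char_matrix:
  fixes A B :: "'a :: field mat"
  assumes A: "A \<in> carrier_mat n n" and B: "B \<in> carrier_mat n n" and AB: "A * B = B * A"
  shows "char_matrix A a * B = B * char_matrix A a"
  using A B AB mult_smult_distrib[OF B one_carrier_mat[of n], of "-a"] unfolding char_matrix_def
  by (simp add: add_mult_distrib_mat[of _ n n] mult_add_distrib_mat[of _ n n]
      mult_smult_assoc_mat[of _ n n])

lemma eigenvalue_char_matrix_iff:
  fixes A :: "'a :: field mat"
  assumes A: "A \<in> carrier_mat n n"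
  shows "eigenvalue (char_matrix A a) b \<longleftrightarrow> eigenvalue A (a + b)"
proof -
  have "char_matrix (char_matrix A a) b = char_matrix A (a + b)"
    unfolding char_matrix_def by (intro eq_matI) auto
  then show ?thesis using A by (simp add: eigenvalue_det[of _ n])
qed

lemma det_pow_mat:
  fixes A :: "'a :: comm_ring_1 mat"
  assumes A: "A \<in> carrier_mat n n"
  shows "det (A ^\<^sub>m k) = det A ^ k"
  by (induct k) (simp_all add: det_mult[OF pow_carrier_mat[OF A] A])

lemma det_nonzero_inverse:
  fixes A :: "'a :: field mat"
  assumes "A \<in> carrier_mat n n" and "det A \<noteq> 0"
  obtains B where "B \<in> carrier_mat n n" "A * B = 1\<^sub>m n" "B * A = 1\<^sub>m n"
proof -
  have "A \<in> Units (ring_mat TYPE('a) n undefined)" by (rule det_non_zero_imp_unit[OF assms])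
  then show ?thesis using that unfolding Units_def by (auto simp: ring_mat_simps)
qed

lemma invertible_mat_iff_det:
  fixes A :: "'a :: field mat"
  assumes A: "A \<in> carrier_mat n n"
  shows "invertible_mat A \<longleftrightarrow> det A \<noteq> 0"
proof
  assume "invertible_mat A"
  then obtain B where AB: "A * B = 1\<^sub>m n" and BA: "B * A = 1\<^sub>m (dim_row B)"
    using A unfolding invertible_mat_def inverts_mat_def by auto
  have "dim_col B = n" using arg_cong[OF AB, of dim_col] by simp
  moreover have "dim_row B = n" using A arg_cong[OF BA, of dim_col] by simp
  ultimately have "det (A * B) = det A * det B" using det_mult[OF A] by auto
  then show "det A \<noteq> 0" using AB by (metis det_one mult_zero_left zero_neq_one)
next
  assume "det A \<noteq> 0"
  with A obtain B where "A * B = 1\<^sub>m n" "B * A = 1\<^sub>m n" "B \<in> carrier_mat n n"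
    by (rule det_nonzero_inverse)
  then show "invertible_mat A"
    using A unfolding invertible_mat_def inverts_mat_def by auto
qed

lemma invertible_mat_iff_not_eigenvalue_0:
  fixes A :: "'a :: field mat"
  assumes A: "A \<in> carrier_mat n n"
  shows "invertible_mat A \<longleftrightarrow> \<not> eigenvalue A 0"
proof -
  have "char_matrix A 0 = A" unfolding char_matrix_def using A by (intro eq_matI) auto
  then show ?thesis using eigenvalue_det[OF A, of 0] invertible_mat_iff_det[OF A] by simp
qed

lemma eigenvalue_square:
  fixes A :: "'a :: comm_ring_1 mat"
  assumes A: "A \<in> carrier_mat n n" and ev: "eigenvalue A c"
  shows "eigenvalue (A * A) (c\<^sup>2)"
proof -
  from ev obtain v where v: "eigenvector A v c" unfolding eigenvalue_def by auto
  have "A ^\<^sub>m 2 = A * A" using A by (simp add: numeral_2_eq_2)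
  with eigenvector_pow[OF A v, of 2] have "(A * A) *\<^sub>v v = c\<^sup>2 \<cdot>\<^sub>v v" by simp
  then show ?thesis using v A unfolding eigenvalue_def eigenvector_def by auto
qed

lemma jordan_matrix_append:
  "jordan_matrix (xs @ ys) = four_block_mat (jordan_matrix xs)
     (0\<^sub>m (sum_list (map fst xs)) (sum_list (map fst ys)))
     (0\<^sub>m (sum_list (map fst ys)) (sum_list (map fst xs))) (jordan_matrix ys)"
  unfolding jordan_matrix_def by (simp add: diag_block_mat_append Let_def jordan_matrix_def[symmetric])

lemma similar_jordan_matrix_rotate1:
  fixes x :: "nat \<times> 'a :: comm_ring_1"
  shows "similar_mat (jordan_matrix (x # xs)) (jordan_matrix (xs @ [x]))"
proof -
  have "similar_mat (jordan_matrix ([x] @ xs)) (jordan_matrix (xs @ [x]))"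
    unfolding jordan_matrix_append by (rule similar_mat_four_block_swap) auto
  then show ?thesis by simp
qed

lemma similar_jordan_matrix_partition:
  fixes n_as :: "(nat \<times> 'a :: comm_ring_1) list"
  shows "similar_mat (jordan_matrix n_as) (jordan_matrix (filter P n_as @ filter (\<lambda>x. \<not> P x) n_as))"
proof (induct n_as)
  case Nil
  show ?case by (simp add: jordan_matrix_def similar_mat_refl[of _ 0])
next
  case (Cons x xs)
  define F where "F = filter P xs"
  define G where "G = filter (\<lambda>x. \<not> P x) xs"
  have "sum_list (map fst (F @ G)) = sum_list (map fst xs)"
    unfolding F_def G_def by (induct xs) auto
  then have Cons_similar: "similar_mat (jordan_matrix (x # xs)) (jordan_matrix (x # F @ G))"
    using jordan_matrix_append[of "[x]" xs] jordan_matrix_append[of "[x]" "F @ G"] Cons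
    by (auto simp: F_def G_def intro!: similar_mat_four_block_0_0 similar_mat_refl)
  show ?case
  proof (cases "P x")
    case True
    with Cons_similar show ?thesis by (simp add: F_def G_def)
  next
    case False
    have "similar_mat (jordan_matrix ((x # F) @ G)) (jordan_matrix ((F @ [x]) @ G))"
      using jordan_matrix_append[of "x # F" G] jordan_matrix_append[of "F @ [x]" G]
      by (auto simp: add.commute intro!: similar_mat_four_block_0_0 similar_jordan_matrix_rotate1
          similar_mat_refl)
    with Cons_similar False show ?thesis
      by (auto simp: F_def G_def intro: similar_mat_trans)
  qed
qed

lemma jordan_nf_partition:
  fixes A :: "'a :: comm_ring_1 mat"
  assumes "jordan_nf A n_as"
  shows "jordan_nf A (filter P n_as @ filter (\<lambda>x. \<not> P x) n_as)"
  using assms similar_jordan_matrix_partition[of n_as P] unfolding jordan_nf_def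
  by (auto intro: similar_mat_trans)

lemma jordan_nf_dim:
  assumes "A \<in> carrier_mat n n" and "jordan_nf A n_as"
  shows "n = sum_list (map fst n_as)"
  using assms similar_matD unfolding jordan_nf_def by fastforce

lemma jordan_nf_eigenvalue:
  fixes A :: "'a :: field mat"
  assumes A: "A \<in> carrier_mat n n" and jnf: "jordan_nf A n_as" and mem: "(m, a) \<in> set n_as"
  shows "eigenvalue A a"
proof -
  have "0 < m" using jnf mem unfolding jordan_nf_def by force
  also have "m \<le> order a (char_poly A)" by (rule jordan_nf_block_size_order_bound[OF jnf mem])
  finally have "order a (char_poly A) \<noteq> 0" by simp
  then show ?thesis unfolding eigenvalue_root_char_poly[OF A] using order_root by blast
qed

lemma jordan_matrix_pow_eq_0:
  fixes n_as :: "(nat \<times> 'a :: field) list"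
  assumes "\<forall>x\<in>set n_as. snd x = 0" and "sum_list (map fst n_as) \<le> m"
  shows "jordan_matrix n_as ^\<^sub>m m = 0\<^sub>m (sum_list (map fst n_as)) (sum_list (map fst n_as))"
  unfolding jordan_matrix_pow using assms
proof (induct n_as)
  case (Cons x xs)
  obtain l a where x: "x = (l, a)" by force
  with Cons.prems have "jordan_block l a ^\<^sub>m m = 0\<^sub>m l l"
    by (intro eq_matI) (auto simp: jordan_block_zero_pow)
  with Cons show ?case by (simp add: x Let_def)
qed simp

lemma det_jordan_matrix_nonzero:
  fixes n_as :: "(nat \<times> 'a :: field) list"
  assumes "\<forall>x\<in>set n_as. snd x \<noteq> 0"
  shows "det (jordan_matrix n_as) \<noteq> 0"
proof -
  let ?J = "jordan_matrix n_as"
  have J: "?J \<in> carrier_mat (sum_list (map fst n_as)) (sum_list (map fst n_as))" by simp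
  have "char_matrix ?J 0 = ?J" unfolding char_matrix_def by (intro eq_matI) auto
  moreover have "poly (char_poly ?J) 0 \<noteq> 0"
    unfolding jordan_matrix_char_poly using assms by (induct n_as) auto
  ultimately show ?thesis using char_poly_matrix[OF J, of 0] det_0_negate[OF J] by simp
qed

lemma commute_nilpotent_invertible_block_diagonal:
  fixes N C B :: "'a :: field mat"
  assumes N: "N \<in> carrier_mat r1 r1" and C: "C \<in> carrier_mat r2 r2"
    and nil: "N ^\<^sub>m m = 0\<^sub>m r1 r1" and det: "det C \<noteq> 0"
    and B: "B \<in> carrier_mat (r1 + r2) (r1 + r2)"
    and comm: "four_block_mat N (0\<^sub>m r1 r2) (0\<^sub>m r2 r1) C * B = B * four_block_mat N (0\<^sub>m r1 r2) (0\<^sub>m r2 r1) C"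
  obtains B1 B4 where "B1 \<in> carrier_mat r1 r1" "B4 \<in> carrier_mat r2 r2"
    "B = four_block_mat B1 (0\<^sub>m r1 r2) (0\<^sub>m r2 r1) B4"
proof -
  obtain B1 B2 B3 B4 where sb: "split_block B r1 r1 = (B1, B2, B3, B4)" by (cases "split_block B r1 r1")
  note blocks = split_block[OF sb, of r2 r2]
  have Bc: "B1 \<in> carrier_mat r1 r1" "B2 \<in> carrier_mat r1 r2" "B3 \<in> carrier_mat r2 r1" "B4 \<in> carrier_mat r2 r2"
    and BB: "B = four_block_mat B1 B2 B3 B4" using blocks B by auto
  define K where "K = C ^\<^sub>m m"
  have K: "K \<in> carrier_mat r2 r2" unfolding K_def using C by simp
  obtain D where D: "D \<in> carrier_mat r2 r2" "K * D = 1\<^sub>m r2" "D * K = 1\<^sub>m r2"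
    using det_nonzero_inverse[OF K] det_pow_mat[OF C, of m] det unfolding K_def by auto
  \<comment> \<open>A high power of the block matrix kills the nilpotent block and keeps the invertible one.\<close>
  have "four_block_mat N (0\<^sub>m r1 r2) (0\<^sub>m r2 r1) C ^\<^sub>m m * B = B * four_block_mat N (0\<^sub>m r1 r2) (0\<^sub>m r2 r1) C ^\<^sub>m m"
    by (rule commute_pow_mat[OF _ B comm]) (use N C in auto)
  then have "four_block_mat (0\<^sub>m r1 r1) (0\<^sub>m r1 r2) (0\<^sub>m r2 r1) K * four_block_mat B1 B2 B3 B4
    = four_block_mat B1 B2 B3 B4 * four_block_mat (0\<^sub>m r1 r1) (0\<^sub>m r1 r2) (0\<^sub>m r2 r1) K"
    unfolding pow_four_block_mat[OF N C] nil K_def[symmetric] BB .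
  then have blocks_eq: "four_block_mat (0\<^sub>m r1 r1) (0\<^sub>m r1 r2) (K * B3) (K * B4)
    = four_block_mat (0\<^sub>m r1 r1) (B2 * K) (0\<^sub>m r2 r1) (B4 * K)"
    using Bc K
    by (simp add: mult_four_block_mat[OF zero_carrier_mat zero_carrier_mat zero_carrier_mat K Bc]
        mult_four_block_mat[OF Bc zero_carrier_mat zero_carrier_mat zero_carrier_mat K])
  have KB3: "K * B3 = 0\<^sub>m r2 r1" and B2K: "B2 * K = 0\<^sub>m r1 r2"
    using four_block_mat_inject[of _ r1 r1 _ _ r2 _ _ r2, OF _ _ _ _ _ _ _ _ blocks_eq] Bc K by auto
  have "B2 = B2 * K * D" using Bc K D by (simp add: assoc_mult_mat[of _ r1 r2 _ r2 _ r2])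
  then have B2: "B2 = 0\<^sub>m r1 r2" using B2K D by simp
  have "B3 = D * K * B3" unfolding D(3) using Bc by simp
  also have "\<dots> = D * (K * B3)" by (rule assoc_mult_mat[OF D(1) K Bc(3)])
  finally have B3: "B3 = 0\<^sub>m r2 r1" using KB3 D by simp
  show ?thesis using that Bc BB B2 B3 by blast
qed

lemma fitting_decomposition:
  fixes M :: "complex mat"
  assumes M: "M \<in> carrier_mat n n"
  obtains r1 r2 N C P Q where "similar_mat_wit M (four_block_mat N (0\<^sub>m r1 r2) (0\<^sub>m r2 r1) C) P Q"
    "N \<in> carrier_mat r1 r1" "C \<in> carrier_mat r2 r2" "N ^\<^sub>m r1 = 0\<^sub>m r1 r1" "det C \<noteq> 0"
    "order 0 (char_poly M) = r1" "\<And>b. b \<noteq> 0 \<Longrightarrow> order b (char_poly M) \<le> r2"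
proof -
  obtain n_as where "jordan_nf M n_as"
    using char_poly_factorized[OF M] jordan_nf_exists[OF M] by blast
  define xs where "xs = filter (\<lambda>x. snd x = 0) n_as"
  define ys where "ys = filter (\<lambda>x. snd x \<noteq> 0) n_as"
  define r1 where "r1 = sum_list (map fst xs)"
  define r2 where "r2 = sum_list (map fst ys)"
  have jnf: "jordan_nf M (xs @ ys)"
    unfolding xs_def ys_def by (rule jordan_nf_partition) fact
  then obtain P Q where "similar_mat_wit M (jordan_matrix (xs @ ys)) P Q"
    unfolding jordan_nf_def similar_mat_def by blast
  moreover have "jordan_matrix (xs @ ys) = four_block_mat (jordan_matrix xs) (0\<^sub>m r1 r2) (0\<^sub>m r2 r1) (jordan_matrix ys)"
    unfolding r1_def r2_def by (rule jordan_matrix_append)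
  ultimately have wit: "similar_mat_wit M (four_block_mat (jordan_matrix xs) (0\<^sub>m r1 r2) (0\<^sub>m r2 r1) (jordan_matrix ys)) P Q"
    by simp
  have N: "jordan_matrix xs \<in> carrier_mat r1 r1" and C: "jordan_matrix ys \<in> carrier_mat r2 r2"
    unfolding r1_def r2_def by auto
  have nil: "jordan_matrix xs ^\<^sub>m r1 = 0\<^sub>m r1 r1"
    unfolding r1_def by (rule jordan_matrix_pow_eq_0) (auto simp: xs_def)
  have det: "det (jordan_matrix ys) \<noteq> 0"
    by (rule det_jordan_matrix_nonzero) (auto simp: ys_def)
  have ord0: "order 0 (char_poly M) = r1"
    unfolding jordan_nf_order[OF jnf] r1_def xs_def ys_def by simp
  have ordb: "order b (char_poly M) \<le> r2" if "b \<noteq> 0" for b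
  proof -
    have "order b (char_poly M) = sum_list (map fst (filter (\<lambda>x. snd x = b) ys))"
      unfolding jordan_nf_order[OF jnf] xs_def using that by simp
    also have "\<dots> \<le> r2" unfolding r2_def by (rule sum_list_filter_le_nat)
    finally show ?thesis .
  qed
  from wit N C nil det ord0 ordb show ?thesis by (rule that)
qed

lemma reducible_family_if_commuting_eigenvalues_0_nonzero:
  fixes e :: "nat \<Rightarrow> complex mat"
  assumes ec: "\<forall>i\<in>{1..k}. e i \<in> carrier_mat n n" and M: "M \<in> carrier_mat n n"
    and comm: "\<forall>i\<in>{1..k}. M * e i = e i * M"
    and ev0: "eigenvalue M 0" and evb: "eigenvalue M b" and b: "b \<noteq> 0"
  shows "reducible_family n k e"
proof -
  obtain r1 r2 N C P Q where wit: "similar_mat_wit M (four_block_mat N (0\<^sub>m r1 r2) (0\<^sub>m r2 r1) C) P Q"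
    and N: "N \<in> carrier_mat r1 r1" and C: "C \<in> carrier_mat r2 r2"
    and nil: "N ^\<^sub>m r1 = 0\<^sub>m r1 r1" and det: "det C \<noteq> 0"
    and ord0: "order 0 (char_poly M) = r1" and ordb: "\<And>b. b \<noteq> 0 \<Longrightarrow> order b (char_poly M) \<le> r2"
    by (rule fitting_decomposition[OF M]) blast
  let ?J = "four_block_mat N (0\<^sub>m r1 r2) (0\<^sub>m r2 r1) C"
  note w = similar_mat_witD2[OF M wit]
  have nr: "n = r1 + r2" using w(5) N C by auto
  have cp: "char_poly M \<noteq> 0" using degree_monic_char_poly[OF M] by auto
  have "order 0 (char_poly M) \<noteq> 0" "order b (char_poly M) \<noteq> 0"
    using ev0 evb cp order_root eigenvalue_root_char_poly[OF M] by blast+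
  then have r1: "0 < r1" and r2: "0 < r2" using ord0 ordb[OF b] by auto
  have QMP: "Q * M * P = ?J"
    using similar_mat_witD2[OF w(5) similar_mat_wit_sym[OF wit]] by simp
  have "\<exists>E. fst E \<in> carrier_mat r1 r1 \<and> snd E \<in> carrier_mat r2 r2 \<and>
      Q * e i * P = four_block_mat (fst E) (0\<^sub>m r1 r2) (0\<^sub>m r2 r1) (snd E)" if i: "i \<in> {1..k}" for i
  proof -
    have ei: "e i \<in> carrier_mat n n" using ec i by auto
    have "?J * (Q * e i * P) = (Q * e i * P) * ?J"
      unfolding QMP[symmetric] using comm i w ei M by (intro commute_similar_mat_wit) auto
    moreover have "Q * e i * P \<in> carrier_mat (r1 + r2) (r1 + r2)" using w ei nr by auto
    ultimately obtain B1 B4 where "B1 \<in> carrier_mat r1 r1" "B4 \<in> carrier_mat r2 r2"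
      "Q * e i * P = four_block_mat B1 (0\<^sub>m r1 r2) (0\<^sub>m r2 r1) B4"
      using commute_nilpotent_invertible_block_diagonal[OF N C nil det] by blast
    then show ?thesis by (intro exI[of _ "(B1, B4)"]) simp
  qed
  then obtain E where "\<forall>i\<in>{1..k}. fst (E i) \<in> carrier_mat r1 r1 \<and> snd (E i) \<in> carrier_mat r2 r2 \<and>
      Q * e i * P = four_block_mat (fst (E i)) (0\<^sub>m r1 r2) (0\<^sub>m r2 r1) (snd (E i))"
    by metis
  then show ?thesis unfolding reducible_family_def
    using w nr r1 r2 by (intro exI[of _ Q] exI[of _ P] exI[of _ r1] exI[of _ "fst \<circ> E"] exI[of _ "snd \<circ> E"]) auto
qed

lemma irreducible_family_commuting_eigenvalue_unique:
  fixes e :: "nat \<Rightarrow> complex mat"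
  assumes ec: "\<forall>i\<in>{1..k}. e i \<in> carrier_mat n n" and irr: "irreducible_family n k e"
    and M: "M \<in> carrier_mat n n" and comm: "\<forall>i\<in>{1..k}. M * e i = e i * M"
    and a: "eigenvalue M a" and b: "eigenvalue M b"
  shows "a = b"
proof (rule ccontr)
  assume "a \<noteq> b"
  have "reducible_family n k e"
  proof (rule reducible_family_if_commuting_eigenvalues_0_nonzero[OF ec])
    show "\<forall>i\<in>{1..k}. char_matrix M a * e i = e i * char_matrix M a"
      using comm ec commute_char_matrix[OF M] by auto
    show "eigenvalue (char_matrix M a) 0" "eigenvalue (char_matrix M a) (b - a)"
      using a b by (simp_all add: eigenvalue_char_matrix_iff[OF M])
  qed (use M \<open>a \<noteq> b\<close> in auto)
  with irr show False unfolding irreducible_family_def by simp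
qed

lemma anticommuting_imp_square_commute:
  fixes A B :: "'a :: comm_ring_1 mat"
  assumes A: "A \<in> carrier_mat n n" and B: "B \<in> carrier_mat n n" and AB: "A * B = - (B * A)"
  shows "A * A * B = B * (A * A)"
proof -
  have "A * A * B = A * (A * B)" using A B by simp
  also have "\<dots> = - (A * (B * A))" unfolding AB using A B by simp
  also have "A * (B * A) = A * B * A" using A B by simp
  also have "\<dots> = - (B * A * A)" unfolding AB using A B by simp
  also have "- (- (B * A * A)) = B * (A * A)" using A B by simp
  finally show ?thesis .
qed

lemma irreducible_anticommuting_spectrum:
  assumes anti: "anticommuting n k e" and irr: "irreducible_family n k e" and i: "i \<in> {1..k}"
  shows "\<exists>l. spectrum (e i) \<subseteq> {l, - l}"
proof (cases "spectrum (e i) = {}")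
  case False
  then obtain c where c: "eigenvalue (e i) c" unfolding spectrum_def by auto
  have ec: "\<forall>j\<in>{1..k}. e j \<in> carrier_mat n n" using anti unfolding anticommuting_def by blast
  then have E: "e i \<in> carrier_mat n n" using i by blast
  have "\<forall>j\<in>{1..k}. e i * e i * e j = e j * (e i * e i)"
    using anti i ec anticommuting_imp_square_commute[OF E] unfolding anticommuting_def
    by (metis assoc_mult_mat)
  then have "d\<^sup>2 = c\<^sup>2" if "eigenvalue (e i) d" for d
    using irreducible_family_commuting_eigenvalue_unique[OF ec irr _ _ eigenvalue_square[OF E that]
        eigenvalue_square[OF E c]] E by auto
  then have "spectrum (e i) \<subseteq> {c, - c}"
    unfolding spectrum_def using power2_eq_iff by blast
  then show ?thesis by blast
qed simp

lemma nilpotent_if_spectrum_0: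
  fixes A :: "complex mat"
  assumes A: "A \<in> carrier_mat n n" and spec: "spectrum A \<subseteq> {0}"
  shows "nilpotent_mat A"
proof -
  obtain n_as where jnf: "jordan_nf A n_as"
    using char_poly_factorized[OF A] jordan_nf_exists[OF A] by blast
  have "\<forall>x\<in>set n_as. snd x = 0"
    using jordan_nf_eigenvalue[OF A jnf] spec unfolding spectrum_def by fastforce
  then have J: "jordan_matrix n_as ^\<^sub>m n = 0\<^sub>m n n"
    using jordan_matrix_pow_eq_0 jordan_nf_dim[OF A jnf] by auto
  from jnf obtain P Q where wit: "similar_mat_wit A (jordan_matrix n_as) P Q"
    unfolding jordan_nf_def similar_mat_def by blast
  have "A ^\<^sub>m n = P * jordan_matrix n_as ^\<^sub>m n * Q" by (rule similar_mat_wit_pow_id[OF wit])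
  also have "\<dots> = 0\<^sub>m n n" unfolding J using similar_mat_witD2[OF A wit] by simp
  finally show ?thesis unfolding nilpotent_mat_def using A by auto
qed

lemma invertible_or_nilpotent_if_spectrum_symmetric:
  fixes A :: "complex mat"
  assumes A: "A \<in> carrier_mat n n" and spec: "spectrum A \<subseteq> {l, - l}"
  shows "invertible_mat A \<or> nilpotent_mat A"
proof (cases "eigenvalue A 0")
  case True
  then have "l = 0" using spec unfolding spectrum_def by auto
  then show ?thesis using nilpotent_if_spectrum_0[OF A] spec by simp
qed (simp add: invertible_mat_iff_not_eigenvalue_0[OF A])

lemma order_char_poly_sum_if_spectrum_two:
  fixes A :: "complex mat"
  assumes A: "A \<in> carrier_mat n n" and spec: "spectrum A \<subseteq> {a, b}" and ab: "a \<noteq> b"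
  shows "n = order a (char_poly A) + order b (char_poly A)"
proof -
  obtain n_as where jnf: "jordan_nf A n_as"
    using char_poly_factorized[OF A] jordan_nf_exists[OF A] by blast
  have "\<forall>x\<in>set n_as. snd x = a \<or> snd x = b"
    using jordan_nf_eigenvalue[OF A jnf] spec unfolding spectrum_def by fastforce
  then show ?thesis
    unfolding jordan_nf_dim[OF A jnf] jordan_nf_order[OF jnf] using ab by (induct n_as) auto
qed

lemma order_char_poly_uminus_if_anticommuting_invertible:
  fixes A B :: "complex mat"
  assumes A: "A \<in> carrier_mat n n" and B: "B \<in> carrier_mat n n" and inv: "invertible_mat B"
    and AB: "A * B = - (B * A)"
  shows "order (- x) (char_poly A) = order x (char_poly A)"
proof -
  obtain C where C: "C \<in> carrier_mat n n" "B * C = 1\<^sub>m n" "C * B = 1\<^sub>m n"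
    using det_nonzero_inverse[OF B] inv invertible_mat_iff_det[OF B] by blast
  have "B * A * C = - (A * B) * C" using A B AB by simp
  also have "\<dots> = - A" using A B C by (simp add: assoc_mult_mat[of _ n n _ n _ n])
  finally have "similar_mat_wit ((-1) \<cdot>\<^sub>m A) A B C"
    using A B C by (intro similar_mat_witI) auto
  then have "char_poly ((-1) \<cdot>\<^sub>m A) = char_poly A"
    by (intro char_poly_similar) (auto simp: similar_mat_def)
  then show ?thesis using order_char_poly_smult[OF A, of "-1" x] by simp
qed

lemma alg_mult_half_if_spectrum_symmetric:
  fixes A :: "complex mat"
  assumes A: "A \<in> carrier_mat n n" and inv: "invertible_mat A" and spec: "spectrum A \<subseteq> {l, - l}"
    and sym: "order (- l) (char_poly A) = order l (char_poly A)"
  shows "even n \<and> alg_mult A l = n div 2"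
proof (cases "l = 0")
  case True
  then have "spectrum A = {}"
    using spec inv invertible_mat_iff_not_eigenvalue_0[OF A] unfolding spectrum_def by auto
  then have "n = 0" using spectrum_non_empty[OF A] by auto
  moreover have "order l (char_poly A) = 0"
    using \<open>spectrum A = {}\<close> eigenvalue_root_char_poly[OF A] order_0I unfolding spectrum_def by blast
  ultimately show ?thesis unfolding alg_mult_def by simp
next
  case False
  then show ?thesis
    using order_char_poly_sum_if_spectrum_two[OF A spec] sym unfolding alg_mult_def by simp
qed

lemma anticommuting_alg_mult_half:
  assumes anti: "anticommuting n k e" and card: "2 \<le> card {j\<in>{1..k}. invertible_mat (e j)}"
    and i: "i \<in> {1..k}" "invertible_mat (e i)" and spec: "spectrum (e i) \<subseteq> {l, - l}"
  shows "even n \<and> alg_mult (e i) l = n div 2"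
proof -
  have ec: "e j \<in> carrier_mat n n" if "j \<in> {1..k}" for j
    using anti that unfolding anticommuting_def by blast
  have "\<not> card {j\<in>{1..k}. invertible_mat (e j)} \<le> Suc 0" using card by simp
  then obtain j where j: "j \<in> {1..k}" "j \<noteq> i" "invertible_mat (e j)"
    using i card_le_Suc0_iff_eq[of "{j\<in>{1..k}. invertible_mat (e j)}"] by auto
  have "e i * e j = - (e j * e i)"
    using anti i(1) j(1,2) unfolding anticommuting_def by (metis (no_types, lifting))
  then have "order (- l) (char_poly (e i)) = order l (char_poly (e i))"
    by (rule order_char_poly_uminus_if_anticommuting_invertible[OF ec[OF i(1)] ec[OF j(1)] j(3)])
  then show ?thesis by (rule alg_mult_half_if_spectrum_symmetric[OF ec[OF i(1)] i(2) spec])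
qed

theorem proposition4p5:
  fixes n k :: nat and e :: "nat \<Rightarrow> complex mat"
  assumes "anticommuting n k e"
    and "irreducible_family n k e"
  shows "(\<forall>i\<in>{1..k}. invertible_mat (e i) \<or> nilpotent_mat (e i)) \<and>
         (\<exists>lam :: nat \<Rightarrow> complex.
            (\<forall>i\<in>{1..k}. spectrum (e i) \<subseteq> {lam i, - lam i}) \<and>
            (2 \<le> card {i\<in>{1..k}. invertible_mat (e i)} \<longrightarrow>
               even n \<and> (\<forall>i\<in>{1..k}. invertible_mat (e i) \<longrightarrow> alg_mult (e i) (lam i) = n div 2)))"
proof -
  have ec: "e i \<in> carrier_mat n n" if "i \<in> {1..k}" for i
    using assms(1) that unfolding anticommuting_def by blast
  have "\<forall>i\<in>{1..k}. \<exists>l. spectrum (e i) \<subseteq> {l, - l}"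
    using irreducible_anticommuting_spectrum[OF assms] by blast
  from bchoice[OF this] obtain lam where spec: "\<forall>i\<in>{1..k}. spectrum (e i) \<subseteq> {lam i, - lam i}" ..
  have "\<forall>i\<in>{1..k}. invertible_mat (e i) \<or> nilpotent_mat (e i)"
    using invertible_or_nilpotent_if_spectrum_symmetric[OF ec] spec by blast
  moreover have "even n \<and> (\<forall>i\<in>{1..k}. invertible_mat (e i) \<longrightarrow> alg_mult (e i) (lam i) = n div 2)"
    if card: "2 \<le> card {i\<in>{1..k}. invertible_mat (e i)}"
  proof -
    have "{i\<in>{1..k}. invertible_mat (e i)} \<noteq> {}" using card by (metis card.empty not_numeral_le_zero)
    then show ?thesis using anticommuting_alg_mult_half[OF assms(1) card] spec by blast
  qed
  ultimately show ?thesis using spec by blast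
qed

end
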